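(* Let ${\cal X}$ be a real Hilbert space, $0\le\tau_{\min}\le\tau_{\max}\le\infty$ and $\mathrm{proj}(t):=\min\{\max\{t,\tau_{\min}\},\tau_{\max}\}$ for $t\in\mathbb{R}$. Let $s,z\in{\cal X}$ with $s\ne0$, set $\rho:=z^Ts$, $$\lambda:=\frac{\|s\|^2+\|z\|^2-\sqrt{(\|s\|^2-\|z\|^2)^2+4\rho^2}}{2},$$ and $$\tau^s:=\mathrm{proj}\Big(\frac{\rho}{\|s\|^2}\Big),\quad\tau^g:=\mathrm{proj}\Big(\frac{\|z\|}{\|s\|}\Big),\quad\tau^z:=\mathrm{proj}\Big(\frac{\|z\|^2}{\rho}\Big),\quad\tau^u:=\mathrm{proj}\Big(\frac{\|z\|^2-\lambda}{\rho}\Big),$$ where $\tau^z$ and $\tau^u$ are defined only if $\rho\ne0$. If $\rho>0$, then $0\le\tau^s\le\tau^u\le\tau^z$ and $0\le\tau^s\le\tau^g\le\tau^z$. If $\rho\le0$, then $0\le\tau_{\min}=\tau^s\le\tau^g$.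
   Context: ${\cal X}$ is a real Hilbert space with inner product written $z^Ts$ and induced norm $\|\cdot\|$. *)

theory Defs
  imports "HOL-Analysis.Analysis" "HOL-Library.Extended_Real"
begin

text \<open>Projection onto [tau_min, tau_max]; tau_max may be infinite, hence an ereal.\<close>
definition proj :: "real \<Rightarrow> ereal \<Rightarrow> real \<Rightarrow> ereal" where
  "proj tmin tmax t = min (max (ereal t) (ereal tmin)) tmax"

end

theory Submission
  imports Defs
begin

text \<open>With \<open>a = \<parallel>s\<parallel>\<^sup>2\<close>, \<open>b = \<parallel>z\<parallel>\<^sup>2\<close> and \<open>r = \<rho>\<close>, \<open>lam\<close> is the smaller eigenvalue of the
  Gram matrix \<open>[[a, r], [r, b]]\<close>, and Cauchy-Schwarz gives \<open>r\<^sup>2 \<le> a b\<close>. Hence \<open>0 \<le> lam \<le> b - r\<^sup>2/a\<close>,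
  which after division by \<open>r > 0\<close> places \<open>(b - lam)/r\<close> between \<open>r/a\<close> and \<open>b/r\<close>; likewise
  \<open>r \<le> \<parallel>s\<parallel> \<parallel>z\<parallel>\<close> places \<open>\<parallel>z\<parallel>/\<parallel>s\<parallel>\<close> between them. Since \<open>proj\<close> is monotone, the ordering
  survives the projection. If \<open>r \<le> 0\<close>, then \<open>r/a \<le> 0 \<le> tmin\<close> is projected to \<open>tmin\<close>.\<close>

lemma proj_mono: "x \<le> y \<Longrightarrow> proj tmin tmax x \<le> proj tmin tmax y"
  unfolding proj_def by (intro min.mono max.mono) auto

lemma proj_ge_tmin: "ereal tmin \<le> tmax \<Longrightarrow> ereal tmin \<le> proj tmin tmax x"
  unfolding proj_def by auto

lemma proj_eq_tmin: "x \<le> tmin \<Longrightarrow> ereal tmin \<le> tmax \<Longrightarrow> proj tmin tmax x = ereal tmin"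
  unfolding proj_def by (auto simp: max_def min_def)

lemma small_eigenvalue_nonneg:
  fixes a b r :: real
  assumes "0 \<le> a" "0 \<le> b" "r\<^sup>2 \<le> a * b"
  shows "0 \<le> (a + b - sqrt ((a - b)\<^sup>2 + 4 * r\<^sup>2)) / 2"
proof -
  have "(a - b)\<^sup>2 + 4 * r\<^sup>2 \<le> (a + b)\<^sup>2"
    using assms(3) by (simp add: power2_eq_square algebra_simps)
  then have "sqrt ((a - b)\<^sup>2 + 4 * r\<^sup>2) \<le> a + b"
    using assms(1,2) by (intro real_le_lsqrt) auto
  then show ?thesis by simp
qed

lemma small_eigenvalue_le:
  fixes a b r :: real
  assumes a: "0 < a" and rab: "r\<^sup>2 \<le> a * b"
  shows "(a + b - sqrt ((a - b)\<^sup>2 + 4 * r\<^sup>2)) / 2 \<le> b - r\<^sup>2 / a"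
proof -
  define q where "q = r\<^sup>2 / a"
  have aq: "a * q = r\<^sup>2" and "0 \<le> q" and "q \<le> b"
    using a rab by (simp_all add: q_def pos_divide_le_eq mult.commute)
  then have "q * (a - b + q) \<le> q * a"
    by (intro mult_left_mono) auto
  then have "(a - b + 2 * q)\<^sup>2 \<le> (a - b)\<^sup>2 + 4 * r\<^sup>2"
    using aq by (simp add: power2_eq_square algebra_simps)
  then have "a - b + 2 * q \<le> sqrt ((a - b)\<^sup>2 + 4 * r\<^sup>2)"
    by (rule real_le_rsqrt)
  then show ?thesis by (simp add: q_def)
qed

lemma small_eigenvalue_quotient_chain:
  fixes a b r :: real
  assumes a: "0 < a" and r: "0 < r" and rab: "r\<^sup>2 \<le> a * b"
  defines "lam \<equiv> (a + b - sqrt ((a - b)\<^sup>2 + 4 * r\<^sup>2)) / 2"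
  shows "r / a \<le> (b - lam) / r" and "(b - lam) / r \<le> b / r"
proof -
  have "0 \<le> a * b"
    using rab zero_le_power2[of r] by linarith
  then have "0 \<le> b"
    using a by (simp add: zero_le_mult_iff)
  then have "0 \<le> lam"
    unfolding lam_def using a rab by (intro small_eigenvalue_nonneg) auto
  then show "(b - lam) / r \<le> b / r"
    using r by (simp add: divide_right_mono)
  have "r\<^sup>2 / a \<le> b - lam"
    unfolding lam_def using small_eigenvalue_le[OF a rab] by linarith
  then have "r / a * r \<le> b - lam"
    by (simp add: power2_eq_square)
  then show "r / a \<le> (b - lam) / r"
    using r by (simp add: pos_le_divide_eq)
qed

lemma quotient_chain_if_le_mult:
  fixes a b r :: real
  assumes a: "0 < a" and b: "0 \<le> b" and r: "0 < r" and rab: "r \<le> a * b"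
  shows "r / a\<^sup>2 \<le> b / a" and "b / a \<le> b\<^sup>2 / r"
proof -
  have "r / a \<le> b"
    using a rab by (simp add: pos_divide_le_eq mult.commute)
  then show "r / a\<^sup>2 \<le> b / a"
    using a by (simp add: power2_eq_square divide_right_mono flip: divide_divide_eq_left)
  have "b * r \<le> b\<^sup>2 * a"
    using mult_left_mono[OF rab b] by (simp add: power2_eq_square algebra_simps)
  then show "b / a \<le> b\<^sup>2 / r"
    using a r by (simp add: pos_divide_le_eq pos_le_divide_eq)
qed

theorem lemma3p2:
  fixes s z :: "'a::{real_inner, complete_space}"
    and tmin :: real and tmax :: ereal
  assumes "0 \<le> tmin" and "ereal tmin \<le> tmax" and "s \<noteq> 0"
  defines "\<rho> \<equiv> z \<bullet> s"
  defines "lam \<equiv> ((norm s)\<^sup>2 + (norm z)\<^sup>2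
                 - sqrt (((norm s)\<^sup>2 - (norm z)\<^sup>2)\<^sup>2 + 4 * \<rho>\<^sup>2)) / 2"
  defines "\<tau>s \<equiv> proj tmin tmax (\<rho> / (norm s)\<^sup>2)"
  defines "\<tau>g \<equiv> proj tmin tmax (norm z / norm s)"
  defines "\<tau>z \<equiv> proj tmin tmax ((norm z)\<^sup>2 / \<rho>)"
  defines "\<tau>u \<equiv> proj tmin tmax (((norm z)\<^sup>2 - lam) / \<rho>)"
  shows "(\<rho> > 0 \<longrightarrow> 0 \<le> \<tau>s \<and> \<tau>s \<le> \<tau>u \<and> \<tau>u \<le> \<tau>z
                    \<and> \<tau>s \<le> \<tau>g \<and> \<tau>g \<le> \<tau>z)
       \<and> (\<rho> \<le> 0 \<longrightarrow> 0 \<le> ereal tmin \<and> ereal tmin = \<tau>s \<and> \<tau>s \<le> \<tau>g)"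
proof -
  have s: "0 < norm s"
    using assms(3) by simp
  have cauchy_schwarz: "\<rho> \<le> norm s * norm z"
    unfolding \<rho>_def using norm_cauchy_schwarz[of z s] by (simp add: mult.commute)
  have "0 \<le> ereal tmin"
    using assms(1) by simp
  also have "\<dots> \<le> \<tau>s"
    unfolding \<tau>s_def by (rule proj_ge_tmin[OF assms(2)])
  finally have "0 \<le> \<tau>s" .
  moreover have "\<tau>s \<le> \<tau>u \<and> \<tau>u \<le> \<tau>z \<and> \<tau>s \<le> \<tau>g \<and> \<tau>g \<le> \<tau>z" if r: "0 < \<rho>"
  proof -
    have "\<rho>\<^sup>2 \<le> (norm s * norm z)\<^sup>2"
      using cauchy_schwarz r by (intro power_mono) auto
    then have "\<rho>\<^sup>2 \<le> (norm s)\<^sup>2 * (norm z)\<^sup>2"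
      by (simp only: power_mult_distrib)
    moreover have "0 < (norm s)\<^sup>2"
      using s by simp
    ultimately have eig: "\<rho> / (norm s)\<^sup>2 \<le> ((norm z)\<^sup>2 - lam) / \<rho>"
      "((norm z)\<^sup>2 - lam) / \<rho> \<le> (norm z)\<^sup>2 / \<rho>"
      unfolding lam_def using small_eigenvalue_quotient_chain r by blast+
    note quot = quotient_chain_if_le_mult[OF s norm_ge_zero r cauchy_schwarz]
    show ?thesis
      unfolding \<tau>s_def \<tau>u_def \<tau>z_def \<tau>g_def by (intro conjI proj_mono eig quot)
  qed
  moreover have "ereal tmin = \<tau>s \<and> \<tau>s \<le> \<tau>g" if "\<rho> \<le> 0"
  proof -
    have "\<rho> / (norm s)\<^sup>2 \<le> 0" and "0 \<le> norm z / norm s"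
      using \<open>\<rho> \<le> 0\<close> s by (simp_all add: divide_nonpos_pos)
    then have "\<rho> / (norm s)\<^sup>2 \<le> tmin" and le_g: "\<rho> / (norm s)\<^sup>2 \<le> norm z / norm s"
      using assms(1) by linarith+
    then have "ereal tmin = \<tau>s"
      unfolding \<tau>s_def using assms(2) by (simp add: proj_eq_tmin)
    moreover have "\<tau>s \<le> \<tau>g"
      unfolding \<tau>s_def \<tau>g_def using le_g by (rule proj_mono)
    ultimately show ?thesis ..
  qed
  ultimately show ?thesis
    using \<open>0 \<le> ereal tmin\<close> by blast
qed

end
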